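(* Let $K\ge1$, $\delta\in(0,1)$, and real parameters $\theta_1,\dots,\theta_K$. For each $i\in[K]$ let $E_i^+$ be an e-value with respect to $[0,\infty)$ (i.e. $E_i^+\ge0$ and $\mathbb{E}[E_i^+]\le1$ whenever $\theta_i\ge0$) and $E_i^-$ an e-value with respect to $(-\infty,0]$ (i.e. $E_i^-\ge0$ and $\mathbb{E}[E_i^-]\le1$ whenever $\theta_i\le0$), with $E_i^+=(E_i^-)^{-1}$, and set $E_i=(E_i^+\vee E_i^-)/2$. The e-values may be arbitrarily dependent across $i$. Let $E_{(1)}\ge\dots\ge E_{(K)}$ be the ordered $E_i$, let $k=\max\{k\in[K]: E_{(k)}\ge K/(\delta k)\}$ (with $k=0$ if the set is empty), and let $R$ be the set of indices of the $k$ largest $E_i$. For each $i\in R$ set $D_i=-1$ if $E_i^+\ge K/(\delta k)$ and $D_i=1$ otherwise. Then $$\mathrm{dFDR}=\mathbb{E}\left[\frac{\sum_{i\in R}\left(\mathbf 1\{D_i=1,\theta_i\le0\}+\mathbf 1\{D_i=-1,\theta_i\ge0\}\right)}{|R|\vee 1}\right]\le\delta .$$ *)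

theory Defs
  imports "HOL-Probability.Probability"
begin

definition eord :: "(nat \<Rightarrow> real) \<Rightarrow> nat \<Rightarrow> nat \<Rightarrow> real" where
  "eord e K j = rev (sort (map e [1..<K+1])) ! (j - 1)"

definition ebh_k :: "(nat \<Rightarrow> real) \<Rightarrow> nat \<Rightarrow> real \<Rightarrow> nat" where
  "ebh_k e K \<delta> =
     (let S = {k \<in> {1..K}. eord e K k \<ge> real K / (\<delta> * real k)} in
      if S = {} then 0 else Max S)"

text \<open>R is a set of indices of the k largest values (any tie-breaking).\<close>
definition top_set :: "(nat \<Rightarrow> real) \<Rightarrow> nat \<Rightarrow> nat \<Rightarrow> nat set \<Rightarrow> bool" where
  "top_set e K k R \<longleftrightarrow> R \<subseteq> {1..K} \<and> card R = k \<and>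
     (\<forall>i\<in>R. \<forall>j\<in>{1..K} - R. e j \<le> e i)"

definition dir_dec :: "real \<Rightarrow> nat \<Rightarrow> real \<Rightarrow> nat \<Rightarrow> int" where
  "dir_dec ep K \<delta> k = (if ep \<ge> real K / (\<delta> * real k) then -1 else 1)"

end

theory Submission imports Defs begin

text \<open>
  Write \<open>k\<close> for the number of rejections and \<open>T = K / (\<delta> k)\<close>. Every selected \<open>i\<close> has
  \<open>max E\<^sub>i\<^sup>+ E\<^sub>i\<^sup>- \<ge> 2 T\<close>, and whenever the sign claimed for \<open>i\<close> is wrong, the e-value
  \<open>X\<^sub>i\<close> of the true null (\<open>E\<^sub>i\<^sup>+\<close> if \<open>\<theta>\<^sub>i > 0\<close>, \<open>E\<^sub>i\<^sup>-\<close> if \<open>\<theta>\<^sub>i < 0\<close>, their mean if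
  \<open>\<theta>\<^sub>i = 0\<close>) is at least \<open>T\<close>. Hence, pointwise, the false directional proportion is
  at most \<open>\<Sum>\<^sub>i X\<^sub>i / (k T) = \<delta>/K \<Sum>\<^sub>i X\<^sub>i\<close>, whose expectation is at most \<open>\<delta>\<close> by linearity
  alone, so no assumption on the dependence is needed.
\<close>

lemma length_filter_ge_nth_rev_sort:
  fixes xs :: "'a::linorder list"
  assumes "k < length xs"
  shows "Suc k \<le> length (filter (\<lambda>x. rev (sort xs) ! k \<le> x) xs)"
proof -
  define L where "L = rev (sort xs)"
  let ?P = "\<lambda>x. L ! k \<le> x"
  have "\<forall>x\<in>set (take (Suc k) L). ?P x"
  proof
    fix x assume "x \<in> set (take (Suc k) L)"
    then obtain m where "m \<le> k" "x = L ! m"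
      using assms by (auto simp: L_def in_set_conv_nth less_Suc_eq_le)
    moreover have "sorted_wrt (\<ge>) L"
      by (simp add: L_def sorted_wrt_rev)
    ultimately show "?P x"
      using assms by (auto simp: L_def sorted_wrt_iff_nth_less le_less)
  qed
  then have "Suc k = length (filter ?P (take (Suc k) L))"
    using assms by (simp add: L_def filter_True min_def)
  also have "\<dots> \<le> length (filter ?P L)"
    by (metis append_take_drop_id filter_append length_append le_add1)
  also have "\<dots> = length (filter ?P xs)"
    by (metis L_def mset_filter mset_rev mset_sort size_mset)
  finally show ?thesis by (simp add: L_def)
qed

lemma card_ge_eord:
  assumes "1 \<le> k" "k \<le> K"
  shows "k \<le> card {j \<in> {1..K}. eord e K k \<le> e j}"
proof -
  let ?P = "\<lambda>j. eord e K k \<le> e j"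
  have "k \<le> length (filter (\<lambda>x. eord e K k \<le> x) (map e [1..<K+1]))"
    using length_filter_ge_nth_rev_sort[of "k - 1" "map e [1..<K+1]"] assms
    by (simp add: eord_def)
  also have "\<dots> = length (filter ?P [1..<K+1])"
    by (simp add: filter_map o_def)
  also have "\<dots> = card (set (filter ?P [1..<K+1]))"
    by (rule distinct_card[symmetric]) simp
  also have "set (filter ?P [1..<K+1]) = {j \<in> {1..K}. ?P j}"
    by auto
  finally show ?thesis .
qed

lemma top_set_eord_le:
  assumes top: "top_set e K k R" and "1 \<le> k" "k \<le> K" "i \<in> R"
  shows "eord e K k \<le> e i"
proof (rule ccontr)
  assume below: "\<not> eord e K k \<le> e i"
  have above: "{j \<in> {1..K}. eord e K k \<le> e j} \<subseteq> R - {i}"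
  proof
    fix j assume "j \<in> {j \<in> {1..K}. eord e K k \<le> e j}"
    then have "j \<in> {1..K}" "e i < e j"
      using below by auto
    moreover have "j \<in> R"
      using top \<open>i \<in> R\<close> \<open>j \<in> {1..K}\<close> \<open>e i < e j\<close> unfolding top_set_def
      by (meson DiffI leD)
    ultimately show "j \<in> R - {i}"
      by auto
  qed
  have "finite R" "card R = k"
    using top finite_subset[of R "{1..K}"] unfolding top_set_def by auto
  have "k \<le> card (R - {i})"
    using card_ge_eord[OF \<open>1 \<le> k\<close> \<open>k \<le> K\<close>, of e] card_mono[OF _ above] \<open>finite R\<close>
    by (meson finite_Diff le_trans)
  also have "\<dots> = k - 1"
    using \<open>finite R\<close> \<open>card R = k\<close> \<open>i \<in> R\<close> by simp
  finally show False
    using \<open>1 \<le> k\<close> by simp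
qed

lemma ebh_k_selected_ge:
  assumes top: "top_set e K (ebh_k e K \<delta>) R" and "i \<in> R"
  shows "real K / (\<delta> * real (ebh_k e K \<delta>)) \<le> e i"
proof -
  let ?S = "{k \<in> {1..K}. real K / (\<delta> * real k) \<le> eord e K k}"
  have "finite R" "card R = ebh_k e K \<delta>"
    using top finite_subset[of R "{1..K}"] unfolding top_set_def by auto
  then have "ebh_k e K \<delta> \<noteq> 0"
    using \<open>i \<in> R\<close> by (metis card_0_eq empty_iff)
  then have "?S \<noteq> {}" and k_eq: "ebh_k e K \<delta> = Max ?S"
    unfolding ebh_k_def Let_def by (auto split: if_splits)
  then have "ebh_k e K \<delta> \<in> ?S"
    using Max_in[of ?S] by auto
  then show ?thesis
    using top_set_eord_le[OF top _ _ \<open>i \<in> R\<close>] by force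
qed

definition false_direction :: "int \<Rightarrow> real \<Rightarrow> real" where
  "false_direction D \<theta> = (if D = 1 \<and> \<theta> \<le> 0 then 1 else 0) + (if D = -1 \<and> \<theta> \<ge> 0 then 1 else 0)"

definition null_evalue :: "real \<Rightarrow> real \<Rightarrow> real \<Rightarrow> real" where
  "null_evalue \<theta> ep em = (if \<theta> > 0 then ep else if \<theta> < 0 then em else (ep + em) / 2)"

lemma null_evalue_nonneg: "0 \<le> ep \<Longrightarrow> 0 \<le> em \<Longrightarrow> 0 \<le> null_evalue \<theta> ep em"
  by (simp add: null_evalue_def)

lemma false_direction_dir_dec_le:
  assumes "0 \<le> \<delta>" "0 \<le> ep" "0 \<le> em"
    and selected: "real K / (\<delta> * real k) \<le> max ep em / 2"
  shows "false_direction (dir_dec ep K \<delta> k) \<theta> * (real K / (\<delta> * real k)) \<le> null_evalue \<theta> ep em"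
proof -
  define T where "T = real K / (\<delta> * real k)"
  have "0 \<le> T"
    using \<open>0 \<le> \<delta>\<close> unfolding T_def by simp
  have "2 * T \<le> max ep em"
    using selected unfolding T_def by linarith
  have "max ep em \<le> ep + em"
    using \<open>0 \<le> ep\<close> \<open>0 \<le> em\<close> by simp
  have "false_direction (dir_dec ep K \<delta> k) \<theta> * T \<le> null_evalue \<theta> ep em"
  proof (cases "T \<le> ep")
    case True
    then have "dir_dec ep K \<delta> k = -1"
      unfolding dir_dec_def T_def by simp
    then show ?thesis
      using True \<open>2 * T \<le> max ep em\<close> \<open>max ep em \<le> ep + em\<close>
      by (auto simp: false_direction_def null_evalue_def)
  next
    case False
    then have "dir_dec ep K \<delta> k = 1"
      unfolding dir_dec_def T_def by simp
    moreover have "2 * T \<le> em"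
      using False \<open>0 \<le> T\<close> \<open>2 * T \<le> max ep em\<close> by (auto simp: max_def split: if_splits)
    ultimately show ?thesis
      using False \<open>0 \<le> ep\<close> \<open>0 \<le> T\<close>
      by (auto simp: false_direction_def null_evalue_def)
  qed
  then show ?thesis
    unfolding T_def .
qed

lemma ebh_false_direction_proportion_le:
  fixes ep em \<theta> :: "nat \<Rightarrow> real"
  defines "e \<equiv> \<lambda>i. max (ep i) (em i) / 2"
  assumes "0 < \<delta>" and nonneg: "\<And>i. i \<in> {1..K} \<Longrightarrow> 0 \<le> ep i \<and> 0 \<le> em i"
    and top: "top_set e K (ebh_k e K \<delta>) R"
  shows "(\<Sum>i\<in>R. false_direction (dir_dec (ep i) K \<delta> (ebh_k e K \<delta>)) (\<theta> i)) / real (max (card R) 1)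
    \<le> \<delta> / real K * (\<Sum>i\<in>{1..K}. null_evalue (\<theta> i) (ep i) (em i))"
proof (cases "R = {}")
  case True
  have "0 \<le> \<delta> / real K * (\<Sum>i\<in>{1..K}. null_evalue (\<theta> i) (ep i) (em i))"
    using \<open>0 < \<delta>\<close> nonneg
    by (intro mult_nonneg_nonneg divide_nonneg_nonneg sum_nonneg null_evalue_nonneg) auto
  then show ?thesis
    using True by simp
next
  case False
  define k where "k = ebh_k e K \<delta>"
  have R_sub: "R \<subseteq> {1..K}" and "card R = k"
    using top unfolding top_set_def k_def by auto
  then have "1 \<le> k" "1 \<le> K"
    using False finite_subset[OF R_sub] by (auto simp: Suc_le_eq card_gt_0_iff)
  have error_le: "false_direction (dir_dec (ep i) K \<delta> k) (\<theta> i) / real k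
      \<le> \<delta> / real K * null_evalue (\<theta> i) (ep i) (em i)" if "i \<in> R" for i
  proof -
    have "false_direction (dir_dec (ep i) K \<delta> k) (\<theta> i) * (real K / (\<delta> * real k))
        \<le> null_evalue (\<theta> i) (ep i) (em i)"
      using false_direction_dir_dec_le[of \<delta> "ep i" "em i" K k] ebh_k_selected_ge[OF top that]
        \<open>0 < \<delta>\<close> nonneg that R_sub unfolding k_def e_def by auto
    then show ?thesis
      using \<open>0 < \<delta>\<close> \<open>1 \<le> k\<close> \<open>1 \<le> K\<close> by (simp add: field_simps)
  qed
  have "(\<Sum>i\<in>R. false_direction (dir_dec (ep i) K \<delta> k) (\<theta> i)) / real (max (card R) 1)
      = (\<Sum>i\<in>R. false_direction (dir_dec (ep i) K \<delta> k) (\<theta> i) / real k)"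
    using \<open>card R = k\<close> \<open>1 \<le> k\<close> by (simp add: sum_divide_distrib max_def)
  also have "\<dots> \<le> (\<Sum>i\<in>R. \<delta> / real K * null_evalue (\<theta> i) (ep i) (em i))"
    using error_le by (rule sum_mono)
  also have "\<dots> \<le> (\<Sum>i\<in>{1..K}. \<delta> / real K * null_evalue (\<theta> i) (ep i) (em i))"
    using R_sub nonneg \<open>0 < \<delta>\<close> by (intro sum_mono2) (auto simp: null_evalue_nonneg)
  finally show ?thesis
    by (simp add: k_def sum_distrib_left)
qed

lemma evalue_integrable:
  fixes f :: "'a \<Rightarrow> real"
  assumes "f \<in> borel_measurable M" "\<And>x. x \<in> space M \<Longrightarrow> 0 \<le> f x"
    and "(\<integral>\<^sup>+ x. ennreal (f x) \<partial>M) \<le> 1"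
  shows "integrable M f" "integral\<^sup>L M f \<le> 1"
proof -
  have "AE x in M. 0 \<le> f x" using assms(2) by simp
  then show "integrable M f" "integral\<^sup>L M f \<le> 1"
    using assms(1,3) integral_eq_nn_integral[OF assms(1)]
    by (auto intro!: integrableI_nonneg simp: order_le_less_trans enn2real_leI)
qed

lemma null_evalue_integrable:
  fixes ep em :: "'a \<Rightarrow> real"
  assumes "ep \<in> borel_measurable M" "em \<in> borel_measurable M"
    and "\<And>x. x \<in> space M \<Longrightarrow> 0 \<le> ep x" "\<And>x. x \<in> space M \<Longrightarrow> 0 \<le> em x"
    and ep_evalue: "\<theta> \<ge> 0 \<Longrightarrow> (\<integral>\<^sup>+ x. ennreal (ep x) \<partial>M) \<le> 1"
    and em_evalue: "\<theta> \<le> 0 \<Longrightarrow> (\<integral>\<^sup>+ x. ennreal (em x) \<partial>M) \<le> 1"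
  shows "integrable M (\<lambda>x. null_evalue \<theta> (ep x) (em x))"
    and "(\<integral>x. null_evalue \<theta> (ep x) (em x) \<partial>M) \<le> 1"
proof -
  note ep = evalue_integrable[OF assms(1,3) ep_evalue]
  note em = evalue_integrable[OF assms(2,4) em_evalue]
  have "integrable M (\<lambda>x. null_evalue \<theta> (ep x) (em x))
      \<and> (\<integral>x. null_evalue \<theta> (ep x) (em x) \<partial>M) \<le> 1"
    using ep em by (cases \<theta> "0::real" rule: linorder_cases) (simp_all add: null_evalue_def)
  then show "integrable M (\<lambda>x. null_evalue \<theta> (ep x) (em x))"
    and "(\<integral>x. null_evalue \<theta> (ep x) (em x) \<partial>M) \<le> 1" by auto
qed

lemma integral_sum_le_card:
  fixes X :: "'i \<Rightarrow> 'a \<Rightarrow> real"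
  assumes "\<And>i. i \<in> I \<Longrightarrow> integrable M (X i)" "\<And>i. i \<in> I \<Longrightarrow> integral\<^sup>L M (X i) \<le> 1"
  shows "(\<integral>x. (\<Sum>i\<in>I. X i x) \<partial>M) \<le> card I"
proof -
  have "(\<integral>x. (\<Sum>i\<in>I. X i x) \<partial>M) = (\<Sum>i\<in>I. integral\<^sup>L M (X i))"
    by (rule Bochner_Integration.integral_sum[OF assms(1)])
  also have "\<dots> \<le> (\<Sum>i\<in>I. 1)"
    using assms(2) by (rule sum_mono)
  finally show ?thesis by simp
qed

theorem corollary3:
  fixes M :: "'a measure" and K :: nat and \<delta> :: real
    and \<theta> :: "nat \<Rightarrow> real"
    and Ep Em :: "nat \<Rightarrow> 'a \<Rightarrow> real"
    and R :: "'a \<Rightarrow> nat set"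
  assumes "prob_space M"
    and "K \<ge> 1" and "0 < \<delta>" and "\<delta> < 1"
    and "\<And>i. i \<in> {1..K} \<Longrightarrow> Ep i \<in> borel_measurable M"
    and "\<And>i. i \<in> {1..K} \<Longrightarrow> Em i \<in> borel_measurable M"
    and "\<And>i \<omega>. i \<in> {1..K} \<Longrightarrow> \<omega> \<in> space M \<Longrightarrow> Ep i \<omega> \<ge> 0"
    and "\<And>i \<omega>. i \<in> {1..K} \<Longrightarrow> \<omega> \<in> space M \<Longrightarrow> Em i \<omega> \<ge> 0"
    and "\<And>i. i \<in> {1..K} \<Longrightarrow> \<theta> i \<ge> 0 \<Longrightarrow> (\<integral>\<^sup>+ \<omega>. ennreal (Ep i \<omega>) \<partial>M) \<le> 1"
    and "\<And>i. i \<in> {1..K} \<Longrightarrow> \<theta> i \<le> 0 \<Longrightarrow> (\<integral>\<^sup>+ \<omega>. ennreal (Em i \<omega>) \<partial>M) \<le> 1"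
    and "\<And>i \<omega>. i \<in> {1..K} \<Longrightarrow> \<omega> \<in> space M \<Longrightarrow> Ep i \<omega> = inverse (Em i \<omega>)"
    and "\<And>\<omega>. \<omega> \<in> space M \<Longrightarrow>
           top_set (\<lambda>i. max (Ep i \<omega>) (Em i \<omega>) / 2) K
             (ebh_k (\<lambda>i. max (Ep i \<omega>) (Em i \<omega>) / 2) K \<delta>) (R \<omega>)"
    and "\<And>i. i \<in> {1..K} \<Longrightarrow> {\<omega> \<in> space M. i \<in> R \<omega>} \<in> sets M"
  shows "(\<integral>\<omega>. (\<Sum>i\<in>R \<omega>.
             (let k = ebh_k (\<lambda>j. max (Ep j \<omega>) (Em j \<omega>) / 2) K \<delta>;
                  D = dir_dec (Ep i \<omega>) K \<delta> k
              in (if D = 1 \<and> \<theta> i \<le> 0 then 1 else 0)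
                 + (if D = -1 \<and> \<theta> i \<ge> 0 then 1 else 0)))
           / real (max (card (R \<omega>)) 1) \<partial>M) \<le> \<delta>"
  (is "integral\<^sup>L M ?fdp \<le> _")
proof -
  define X where "X i \<omega> = null_evalue (\<theta> i) (Ep i \<omega>) (Em i \<omega>)" for i \<omega>
  define bound where "bound \<omega> = \<delta> / real K * (\<Sum>i\<in>{1..K}. X i \<omega>)" for \<omega>
  have X_evalue: "integrable M (X i)" "integral\<^sup>L M (X i) \<le> 1" if "i \<in> {1..K}" for i
    using null_evalue_integrable[OF assms(5-8)[OF that] assms(9,10)[OF that]]
    unfolding X_def by blast+
  have "integrable M bound"
    unfolding bound_def using X_evalue(1) by (intro integrable_mult_right integrable_sum) auto
  moreover have "integral\<^sup>L M bound \<le> \<delta>"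
  proof -
    have "integral\<^sup>L M bound = \<delta> / real K * (\<integral>\<omega>. (\<Sum>i\<in>{1..K}. X i \<omega>) \<partial>M)"
      unfolding bound_def by simp
    also have "\<dots> \<le> \<delta> / real K * real K"
      using integral_sum_le_card[of "{1..K}" M X] X_evalue \<open>0 < \<delta>\<close> by (intro mult_left_mono) auto
    also have "\<dots> = \<delta>"
      using \<open>K \<ge> 1\<close> by simp
    finally show ?thesis .
  qed
  moreover have "bound \<omega> \<ge> 0" if "\<omega> \<in> space M" for \<omega>
    unfolding bound_def X_def using that assms(7,8) \<open>0 < \<delta>\<close>
    by (intro mult_nonneg_nonneg divide_nonneg_nonneg sum_nonneg null_evalue_nonneg) auto
  moreover have "?fdp \<omega> \<le> bound \<omega>" if "\<omega> \<in> space M" for \<omega>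
    using ebh_false_direction_proportion_le[OF \<open>0 < \<delta>\<close> _ assms(12)[OF that], of \<theta>]
      assms(7,8) that
    unfolding bound_def X_def false_direction_def Let_def by auto
  ultimately show ?thesis
    by (meson integral_mono' order_trans)
qed

end
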